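(* Let $x\in\mathbb{R}^d$, $d\ge1$, and run the following procedure. Compute $(\theta,p)=\mathrm{csa}_{\text{even}}(x)$. If $\theta^\top\Pi_{[0,1]^d}(x)\le p$, stop. Otherwise set $R:=\{1,\dots,d\}$, $q:=p$ and repeat the following loop: if $|R|=1$, stop; compute $v_R := x_R - \frac{\theta_R^\top x_R - q}{|R|}\theta_R$; let $S := \{j\in R : (v_j>1 \text{ and } \theta_j=1) \text{ or } (v_j<0\text{ and }\theta_j=-1)\}$; if $S=\emptyset$, stop; otherwise replace $q$ by $q - |\{j\in S:\theta_j=1\}|$ and $R$ by $R\setminus S$, and repeat. Then $R$ never becomes empty, i.e. in every execution of the loop $S\neq R$.
   Context: For $R\subseteq\{1,\dots,d\}$ and $u\in\mathbb{R}^d$, $u_R$ denotes the subvector $(u_j)_{j\in R}$; $\Pi_{[0,1]^d}$ is componentwise clipping to $[0,1]$. $\mathrm{csa}_{\text{even}}(x)$: set $\theta_j=1$ if $x_j>1/2$ and $\theta_j=-1$ otherwise; if $|\{j:\theta_j=1\}|$ is even, choose $j^*\in\arg\min_j|x_j-1/2|$ and replace $\theta_{j^*}$ by $-\theta_{j^*}$; set $p=|\{j:\theta_j=1\}|-1$; output $(\theta,p)$. (This is the paper's Algorithm 1, where $|R|$ is the variable $l$.) *)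

theory Defs
  imports "HOL-Analysis.Analysis"
begin

text \<open>Vectors in R^d are modelled as real^'n with a finite index type 'n (d = CARD('n) \<ge> 1).\<close>

definition csa_theta0 :: "real^'n \<Rightarrow> 'n \<Rightarrow> real" where
  "csa_theta0 x j = (if x $ j > 1/2 then 1 else -1)"

text \<open>A valid choice of the flipped index j*: an argmin of |x_j - 1/2|.\<close>
definition csa_pivot :: "real^'n \<Rightarrow> 'n \<Rightarrow> bool" where
  "csa_pivot x js \<longleftrightarrow> (\<forall>j. \<bar>x $ js - 1/2\<bar> \<le> \<bar>x $ j - 1/2\<bar>)"

definition csa_theta :: "real^'n \<Rightarrow> 'n \<Rightarrow> 'n \<Rightarrow> real" where
  "csa_theta x js =
     (if even (card {j. csa_theta0 x j = 1})
      then (csa_theta0 x)(js := - csa_theta0 x js)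
      else csa_theta0 x)"

definition csa_p :: "real^'n \<Rightarrow> 'n \<Rightarrow> real" where
  "csa_p x js = real (card {j. csa_theta x js j = 1}) - 1"

definition clip01 :: "real^'n \<Rightarrow> real^'n" where
  "clip01 x = (\<chi> j. max 0 (min 1 (x $ j)))"

definition loop_v :: "real^'n \<Rightarrow> ('n \<Rightarrow> real) \<Rightarrow> 'n set \<Rightarrow> real \<Rightarrow> 'n \<Rightarrow> real" where
  "loop_v x \<theta> R q j = x $ j - ((\<Sum>i\<in>R. \<theta> i * x $ i) - q) / real (card R) * \<theta> j"

definition loop_S :: "real^'n \<Rightarrow> ('n \<Rightarrow> real) \<Rightarrow> 'n set \<Rightarrow> real \<Rightarrow> 'n set" where
  "loop_S x \<theta> R q = {j \<in> R. (loop_v x \<theta> R q j > 1 \<and> \<theta> j = 1) \<or> (loop_v x \<theta> R q j < 0 \<and> \<theta> j = -1)}"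

text \<open>States (R, q) at which the loop body is entered during the execution of the procedure.\<close>
inductive loop_reach :: "real^'n \<Rightarrow> ('n \<Rightarrow> real) \<Rightarrow> real \<Rightarrow> 'n set \<Rightarrow> real \<Rightarrow> bool"
  for x :: "real^'n" and \<theta> :: "'n \<Rightarrow> real" and p :: real where
  start: "(\<Sum>j\<in>UNIV. \<theta> j * clip01 x $ j) > p \<Longrightarrow> loop_reach x \<theta> p UNIV p"
| step: "loop_reach x \<theta> p R q \<Longrightarrow> card R \<noteq> 1 \<Longrightarrow> loop_S x \<theta> R q \<noteq> {} \<Longrightarrow>
     loop_reach x \<theta> p (R - loop_S x \<theta> R q) (q - real (card {j \<in> loop_S x \<theta> R q. \<theta> j = 1}))"

end

theory Submission
  imports Defs
begin

text \<open>Along the loop, q stays equal to the number of indices j in R with theta_j = 1, minus one.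
  The point v_R is the projection of x_R onto the hyperplane theta_R^T v = q, while every j in S
  satisfies theta_j v_j > [theta_j = 1]. So S = R would give q > |{j in R. theta_j = 1}| = q + 1.\<close>

lemma csa_theta_sign: "csa_theta x js j = 1 \<or> csa_theta x js j = -1"
  unfolding csa_theta_def csa_theta0_def by auto

lemma loop_S_subset: "loop_S x \<theta> R q \<subseteq> R"
  unfolding loop_S_def by auto

lemma sum_sign_mult_loop_v:
  fixes x :: "real^'n"
  assumes sign: "\<forall>j\<in>R. \<theta> j = 1 \<or> \<theta> j = -1" and "R \<noteq> {}"
  shows "(\<Sum>j\<in>R. \<theta> j * loop_v x \<theta> R q j) = q"
proof -
  define c where "c = ((\<Sum>i\<in>R. \<theta> i * x $ i) - q) / real (card R)"
  have card_pos: "real (card R) > 0"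
    using \<open>R \<noteq> {}\<close> by (simp add: card_gt_0_iff)
  have "(\<Sum>j\<in>R. \<theta> j * \<theta> j) = (\<Sum>j\<in>R. 1::real)"
    using sign by (intro sum.cong) auto
  then have sum_squares: "(\<Sum>j\<in>R. \<theta> j * \<theta> j) = real (card R)"
    by simp
  have "(\<Sum>j\<in>R. \<theta> j * loop_v x \<theta> R q j) = (\<Sum>j\<in>R. \<theta> j * x $ j - c * (\<theta> j * \<theta> j))"
    unfolding loop_v_def c_def by (intro sum.cong) (auto simp: algebra_simps)
  also have "\<dots> = (\<Sum>j\<in>R. \<theta> j * x $ j) - c * real (card R)"
    by (simp add: sum_subtractf sum_distrib_left[symmetric] sum_squares)
  also have "\<dots> = q"
    unfolding c_def using card_pos \<open>R \<noteq> {}\<close> by simp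
  finally show ?thesis .
qed

lemma loop_S_neq_self:
  fixes x :: "real^'n"
  assumes sign: "\<forall>j\<in>R. \<theta> j = 1 \<or> \<theta> j = -1" and "R \<noteq> {}"
    and q: "q = real (card {j\<in>R. \<theta> j = 1}) - 1"
  shows "loop_S x \<theta> R q \<noteq> R"
proof
  assume S_eq: "loop_S x \<theta> R q = R"
  have "real (card {j\<in>R. \<theta> j = 1}) = (\<Sum>j\<in>R. if \<theta> j = 1 then 1 else 0)"
    by (simp add: sum.If_cases Int_def conj_commute)
  also have "\<dots> < (\<Sum>j\<in>R. \<theta> j * loop_v x \<theta> R q j)"
  proof (rule sum_strict_mono[OF finite \<open>R \<noteq> {}\<close>])
    fix j assume "j \<in> R"
    then have "j \<in> loop_S x \<theta> R q"
      using S_eq by simp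
    then show "(if \<theta> j = 1 then 1 else 0) < \<theta> j * loop_v x \<theta> R q j"
      unfolding loop_S_def by auto
  qed
  also have "\<dots> = q"
    using sum_sign_mult_loop_v[OF sign \<open>R \<noteq> {}\<close>] .
  finally show False
    using q by simp
qed

lemma loop_reach_invariant:
  fixes x :: "real^'n"
  assumes "loop_reach x \<theta> p R q"
    and sign: "\<forall>j. \<theta> j = 1 \<or> \<theta> j = -1"
    and p: "p = real (card {j. \<theta> j = 1}) - 1"
  shows "R \<noteq> {} \<and> q = real (card {j\<in>R. \<theta> j = 1}) - 1"
  using assms(1)
proof induction
  case start
  then show ?case
    using p by simp
next
  case (step R q)
  let ?S = "loop_S x \<theta> R q"
  let ?P = "\<lambda>A. {j\<in>A. \<theta> j = 1}"
  have "?S \<noteq> R"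
    using loop_S_neq_self sign step.IH by blast
  then have nonempty: "R - ?S \<noteq> {}"
    using loop_S_subset by blast
  have "?P ?S \<subseteq> ?P R" and "?P (R - ?S) = ?P R - ?P ?S"
    using loop_S_subset by blast+
  then have "real (card (?P (R - ?S))) = real (card (?P R)) - real (card (?P ?S))"
    by (simp add: card_Diff_subset card_mono of_nat_diff)
  then show ?case
    using nonempty step.IH by simp
qed

theorem theorem9:
  fixes x :: "real^'n" and js :: 'n and R :: "'n set" and q :: real
  assumes "csa_pivot x js"
    and "loop_reach x (csa_theta x js) (csa_p x js) R q"
    and "card R \<noteq> 1"
  shows "loop_S x (csa_theta x js) R q \<noteq> R"
proof -
  have "R \<noteq> {} \<and> q = real (card {j\<in>R. csa_theta x js j = 1}) - 1"
    by (rule loop_reach_invariant[OF assms(2)]) (simp_all add: csa_theta_sign csa_p_def)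
  then show ?thesis
    using loop_S_neq_self csa_theta_sign by blast
qed

end
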